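(* For every odd positive integer $k$, there is a matroid in $\mathcal{D}$ that has a minor isomorphic to the binary projective geometry $PG(k-1,2)$. In particular, members of $\mathcal{D}$ can have arbitrarily large binary projective geometries as minors.
   Context: Relaxing a circuit-hyperplane $H$ of $M$ means forming the matroid on $E(M)$ whose bases are the bases of $M$ together with $H$. $\mathcal{D}$ is the collection of all matroids obtained from a connected binary matroid $M$ having two disjoint circuit-hyperplanes $X,Y$ with $X\cup Y=E(M)$ by relaxing both $X$ and $Y$ (the matroid on $E(M)$ whose bases are the bases of $M$ together with $X$ and $Y$). $PG(k-1,2)$ is the rank-$k$ binary projective geometry, i.e. the vector matroid of all $2^k-1$ nonzero vectors of $\mathrm{GF}(2)^k$. *)

theory Defs
  imports Main "HOL-Library.Z2"
begin

type_synonym 'a matroid = "'a set \<times> 'a set set"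

definition ground :: "'a matroid \<Rightarrow> 'a set" where "ground M = fst M"
definition bases :: "'a matroid \<Rightarrow> 'a set set" where "bases M = snd M"

definition matroid :: "'a matroid \<Rightarrow> bool" where
  "matroid M \<longleftrightarrow> finite (ground M) \<and> bases M \<noteq> {} \<and>
     (\<forall>B\<in>bases M. B \<subseteq> ground M) \<and>
     (\<forall>B1\<in>bases M. \<forall>B2\<in>bases M. \<forall>x\<in>B1 - B2.
        \<exists>y\<in>B2 - B1. insert y (B1 - {x}) \<in> bases M)"

definition indep :: "'a matroid \<Rightarrow> 'a set \<Rightarrow> bool" where
  "indep M I \<longleftrightarrow> (\<exists>B\<in>bases M. I \<subseteq> B)"

definition rank :: "'a matroid \<Rightarrow> 'a set \<Rightarrow> nat" where
  "rank M X = Max {card I | I. I \<subseteq> X \<and> indep M I}"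

definition circuit :: "'a matroid \<Rightarrow> 'a set \<Rightarrow> bool" where
  "circuit M C \<longleftrightarrow> C \<subseteq> ground M \<and> \<not> indep M C \<and> (\<forall>C'. C' \<subset> C \<longrightarrow> indep M C')"

definition flat :: "'a matroid \<Rightarrow> 'a set \<Rightarrow> bool" where
  "flat M F \<longleftrightarrow> F \<subseteq> ground M \<and> (\<forall>x\<in>ground M - F. rank M (insert x F) > rank M F)"

definition hyperplane :: "'a matroid \<Rightarrow> 'a set \<Rightarrow> bool" where
  "hyperplane M H \<longleftrightarrow> flat M H \<and> rank M H + 1 = rank M (ground M)"

definition circuit_hyperplane :: "'a matroid \<Rightarrow> 'a set \<Rightarrow> bool" where
  "circuit_hyperplane M X \<longleftrightarrow> circuit M X \<and> hyperplane M X"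

definition connected_matroid :: "'a matroid \<Rightarrow> bool" where
  "connected_matroid M \<longleftrightarrow>
     (\<forall>x\<in>ground M. \<forall>y\<in>ground M. x \<noteq> y \<longrightarrow> (\<exists>C. circuit M C \<and> x \<in> C \<and> y \<in> C))"

definition gf2_lin_indep :: "('a \<Rightarrow> nat \<Rightarrow> bit) \<Rightarrow> 'a set \<Rightarrow> bool" where
  "gf2_lin_indep f I \<longleftrightarrow>
     (\<forall>c :: 'a \<Rightarrow> bit. (\<forall>i. (\<Sum>x\<in>I. c x * f x i) = 0) \<longrightarrow> (\<forall>x\<in>I. c x = 0))"

definition binary :: "'a matroid \<Rightarrow> bool" where
  "binary M \<longleftrightarrow> (\<exists>f :: 'a \<Rightarrow> nat \<Rightarrow> bit.
     \<forall>I. I \<subseteq> ground M \<longrightarrow> (indep M I \<longleftrightarrow> gf2_lin_indep f I))"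

definition maximal_sets :: "'a set set \<Rightarrow> 'a set set" where
  "maximal_sets S = {I \<in> S. \<forall>J\<in>S. I \<subseteq> J \<longrightarrow> J = I}"

text \<open>Binary projective geometry PG(k-1,2): the vector matroid of all nonzero vectors of GF(2)^k
  (vectors in GF(2)^nat with support in {0..<k}).\<close>
definition PG :: "nat \<Rightarrow> (nat \<Rightarrow> bit) matroid" where
  "PG k = (let E = {v :: nat \<Rightarrow> bit. (\<forall>i\<ge>k. v i = 0) \<and> v \<noteq> (\<lambda>_. 0)}
           in (E, maximal_sets {I. I \<subseteq> E \<and> gf2_lin_indep id I}))"

text \<open>Minors M/C\D: for C, D disjoint subsets of E and J a basis of M|C, the independent
  sets of M/C\D are the subsets I of E - C - D with I \<union> J independent in M.\<close>
definition is_minor :: "'a matroid \<Rightarrow> 'a matroid \<Rightarrow> bool" where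
  "is_minor N M \<longleftrightarrow> (\<exists>C D J. C \<subseteq> ground M \<and> D \<subseteq> ground M \<and> C \<inter> D = {} \<and>
     J \<in> maximal_sets {I. I \<subseteq> C \<and> indep M I} \<and>
     N = (ground M - C - D, maximal_sets {I. I \<subseteq> ground M - C - D \<and> indep M (I \<union> J)}))"

definition iso :: "'a matroid \<Rightarrow> 'b matroid \<Rightarrow> bool" where
  "iso M N \<longleftrightarrow> (\<exists>\<phi>. bij_betw \<phi> (ground M) (ground N) \<and>
     (\<forall>X. X \<subseteq> ground M \<longrightarrow> (X \<in> bases M \<longleftrightarrow> \<phi> ` X \<in> bases N)))"

text \<open>The class D: relax two disjoint complementary circuit-hyperplanes X, Y of a
  connected binary matroid.\<close>
definition class_D :: "'a matroid set" where
  "class_D = {(ground M, bases M \<union> {X, Y}) | M X Y.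
     matroid M \<and> binary M \<and> connected_matroid M \<and>
     circuit_hyperplane M X \<and> circuit_hyperplane M Y \<and>
     X \<inter> Y = {} \<and> X \<union> Y = ground M}"

end

theory Submission
  imports Defs "HOL-Library.Function_Algebras" "HOL.Vector_Spaces"
begin

text \<open>
  Work in \<open>GF(2)\<^sup>r\<close> with \<open>r = k + 2 + (2\<^sup>k - 1)\<close>: the coordinates below \<open>k\<close> carry
  \<open>PG(k-1,2)\<close>, the coordinates \<open>k\<close> and \<open>k + 1\<close> mark the two halves, and every point \<open>p\<close>
  of \<open>PG(k-1,2)\<close> owns one further coordinate \<open>c(p)\<close>.  The half \<open>X\<close> consists of \<open>e\<^sub>k\<close>, the
  vectors \<open>e\<^sub>i + e\<^sub>k\<close> (\<open>i < k\<close>), the vectors \<open>p + e\<^sub>k + e\<^bsub>k+1\<^esub> + e\<^bsub>c(p)\<^esub>\<close> and the sum of all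
  these; the half \<open>Y\<close> consists of the \<open>e\<^sub>j\<close> (\<open>k < j < r\<close>), the vectors \<open>e\<^sub>i + e\<^bsub>k+1\<^esub>\<close> and their
  sum.  Each half is an independent set of size \<open>r - 1\<close> together with its sum, hence a circuit
  of size \<open>r\<close>.  The sums of the coordinates in \<open>{k+1..<r}\<close>, respectively in \<open>{k}\<close>, vanish
  on one half and are 1 on the other; for the two added sums this needs \<open>2\<^sup>k + k\<close> to be odd,
  i.e. \<open>k\<close> odd.  These functionals make \<open>X\<close> and \<open>Y\<close> complementary hyperplanes and produce,
  for any two elements on opposite sides, a circuit through both, so the binary vector matroid
  is connected and relaxing \<open>X\<close> and \<open>Y\<close> gives a member of \<open>\<D>\<close>.  Finally, contracting
  \<open>e\<^sub>k, \<dots>, e\<^bsub>r-1\<^esub>\<close>, a set contained in neither \<open>X\<close> nor \<open>Y\<close> and hence unaffected by the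
  relaxation, kills all coordinates \<open>\<ge> k\<close> and maps the point vectors onto \<open>PG(k-1,2)\<close>.
\<close>

section \<open>Vectors over GF(2)\<close>

type_synonym vec = "nat \<Rightarrow> bit"

definition gscale :: "bit \<Rightarrow> vec \<Rightarrow> vec" where "gscale c v = (\<lambda>i. c * v i)"

interpretation gf2: vector_space gscale
  by unfold_locales (auto simp: gscale_def fun_eq_iff algebra_simps)

text \<open>Keep bit arithmetic in ring form instead of rewriting it to \<open>xor\<close>/\<open>and\<close>.\<close>
declare add_bit_eq_xor[simp del] mult_bit_eq_and[simp del]

lemma bit_of_nat: "(of_nat n :: bit) = (if even n then 0 else 1)"
  by (induction n) auto

lemma bit_add_eq_0_iff: "(a::bit) + b = 0 \<longleftrightarrow> a = b"
  by (cases a; cases b) simp_all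

lemma vec_add_self [simp]: "(v::vec) + v = 0"
  by (simp add: fun_eq_iff)

lemma vec_add_eq_0_iff: "(v::vec) + w = 0 \<longleftrightarrow> v = w"
  by (metis add.assoc add_0 vec_add_self)

lemma sum_vec_apply: "(\<Sum>x\<in>A. (g x :: vec)) i = (\<Sum>x\<in>A. g x i)"
  by (induction A rule: infinite_finite_induct) auto

lemma gf2_lin_indep_id_iff: "finite S \<Longrightarrow> gf2_lin_indep id S \<longleftrightarrow> gf2.independent S"
  unfolding gf2_lin_indep_def gf2.dependent_finite
  by (auto simp: fun_eq_iff sum_vec_apply gscale_def)

lemma gf2_lin_indep_image_iff:
  assumes "inj_on f I"
  shows "gf2_lin_indep f I \<longleftrightarrow> gf2_lin_indep id (f ` I)"
proof
  assume indep: "gf2_lin_indep f I"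
  show "gf2_lin_indep id (f ` I)"
    unfolding gf2_lin_indep_def
  proof (intro allI impI ballI)
    fix c :: "vec \<Rightarrow> bit" and v
    assume "\<forall>i. (\<Sum>x\<in>f ` I. c x * id x i) = 0" and v: "v \<in> f ` I"
    then have "\<forall>i. (\<Sum>x\<in>I. (c \<circ> f) x * f x i) = 0"
      by (simp add: sum.reindex[OF assms])
    with indep have "\<forall>x\<in>I. (c \<circ> f) x = 0" unfolding gf2_lin_indep_def by blast
    with v show "c v = 0" by auto
  qed
next
  assume indep: "gf2_lin_indep id (f ` I)"
  show "gf2_lin_indep f I"
    unfolding gf2_lin_indep_def
  proof (intro allI impI ballI)
    fix c :: "_ \<Rightarrow> bit" and x assume sum0: "\<forall>i. (\<Sum>x\<in>I. c x * f x i) = 0" and x: "x \<in> I"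
    have "\<forall>i. (\<Sum>v\<in>f ` I. (c \<circ> inv_into I f) v * id v i) = 0"
      using sum0 assms by (simp add: sum.reindex)
    with indep have "\<forall>v\<in>f ` I. (c \<circ> inv_into I f) v = 0" unfolding gf2_lin_indep_def by blast
    with x assms show "c x = 0" by auto
  qed
qed

lemma gf2_lin_indep_iff_independent:
  "finite I \<Longrightarrow> inj_on f I \<Longrightarrow> gf2_lin_indep f I \<longleftrightarrow> gf2.independent (f ` I)"
  using gf2_lin_indep_image_iff[of f I] gf2_lin_indep_id_iff[of "f ` I"] by simp

lemma independent_if_echelon:
  fixes S :: "vec set" and level :: "vec \<Rightarrow> nat"
  assumes "finite S"
    and pivot: "\<And>v. v \<in> S \<Longrightarrow> \<exists>j. v j = 1 \<and> (\<forall>w\<in>S. w \<noteq> v \<longrightarrow> w j = 1 \<longrightarrow> level w < level v)"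
  shows "gf2.independent S"
proof (rule gf2.independent_if_scalars_zero[OF assms(1)])
  fix c :: "vec \<Rightarrow> bit" and x
  assume "(\<Sum>v\<in>S. gscale (c v) v) = 0" and "x \<in> S"
  then show "c x = 0"
  proof (induction "level x" arbitrary: x rule: less_induct)
    case less
    obtain j where j: "x j = 1" "\<forall>w\<in>S. w \<noteq> x \<longrightarrow> w j = 1 \<longrightarrow> level w < level x"
      using pivot[OF less.prems(2)] by blast
    have rest: "(\<Sum>w\<in>S - {x}. c w * w j) = 0"
    proof (rule sum.neutral, intro ballI)
      fix w assume "w \<in> S - {x}"
      then show "c w * w j = 0"
        using j(2) less.hyps[OF _ less.prems(1)] by (cases "w j") auto
    qed
    have "0 = (\<Sum>w\<in>S. c w * w j)"
      using fun_cong[OF less.prems(1), of j] by (simp add: sum_vec_apply gscale_def)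
    also have "\<dots> = c x * x j + (\<Sum>w\<in>S - {x}. c w * w j)"
      by (rule sum.remove[OF assms(1) less.prems(2)])
    finally show ?case using j(1) rest by simp
  qed
qed

definition unit_vec :: "nat \<Rightarrow> vec" where "unit_vec j = (\<lambda>i. if i = j then 1 else 0)"

lemma unit_vec_apply: "unit_vec j i = (if i = j then 1 else 0)"
  by (simp add: unit_vec_def)

lemma unit_vec_eq_iff [simp]: "unit_vec a = unit_vec b \<longleftrightarrow> a = b"
  by (auto simp: unit_vec_def fun_eq_iff)

lemma in_span_unit_vecs:
  assumes "finite K" and "\<And>i. i \<notin> K \<Longrightarrow> v i = 0"
  shows "v \<in> gf2.span (unit_vec ` K)"
proof -
  have "v = (\<Sum>j\<in>K. gscale (v j) (unit_vec j))"
  proof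
    fix i
    show "v i = (\<Sum>j\<in>K. gscale (v j) (unit_vec j)) i"
      using assms by (simp add: sum_vec_apply gscale_def unit_vec_def if_distrib[of "\<lambda>x. _ * x"]
          cong: if_cong)
  qed
  also have "\<dots> \<in> gf2.span (unit_vec ` K)"
    by (intro gf2.span_sum gf2.span_scale gf2.span_base) auto
  finally show ?thesis .
qed

lemma independent_unit_vecs: "finite K \<Longrightarrow> gf2.independent (unit_vec ` K)"
  by (rule independent_if_echelon[where level = "\<lambda>_. 0"]) (auto simp: unit_vec_def)

definition supported_below :: "nat \<Rightarrow> vec \<Rightarrow> bool" where
  "supported_below R v \<longleftrightarrow> (\<forall>i\<ge>R. v i = 0)"

lemma supported_below_sum:
  "(\<And>x. x \<in> A \<Longrightarrow> supported_below R (g x)) \<Longrightarrow> supported_below R (\<Sum>x\<in>A. g x)"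
  by (simp add: supported_below_def sum_vec_apply)

lemma independent_supported_below_card_le:
  assumes "gf2.independent S" and "\<forall>v\<in>S. supported_below R v"
  shows "finite S \<and> card S \<le> R"
proof -
  have "S \<subseteq> gf2.span (unit_vec ` {..<R})"
    using assms(2) in_span_unit_vecs[of "{..<R}"] by (auto simp: supported_below_def)
  then have "finite S \<and> card S \<le> card (unit_vec ` {..<R})"
    by (intro gf2.independent_span_bound assms(1)) simp
  then show ?thesis using card_image_le[of "{..<R}" unit_vec] by simp
qed

text \<open>The functionals that separate the two halves of the construction below.\<close>
definition coord_sum :: "nat set \<Rightarrow> vec \<Rightarrow> bit" where "coord_sum J v = (\<Sum>i\<in>J. v i)"

lemma coord_sum_add: "coord_sum J (v + w) = coord_sum J v + coord_sum J w"
  by (simp add: coord_sum_def sum.distrib)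

lemma coord_sum_sum: "coord_sum J (\<Sum>x\<in>A. g x) = (\<Sum>x\<in>A. coord_sum J (g x))"
  by (simp add: coord_sum_def sum_vec_apply sum.swap[of _ J])

lemma coord_sum_sum_odd:
  assumes "odd (card A)" and "\<forall>x\<in>A. coord_sum J (g x) = c"
  shows "coord_sum J (\<Sum>x\<in>A. g x) = c"
proof -
  have "coord_sum J (\<Sum>x\<in>A. g x) = of_nat (card A) * c"
    using assms(2) by (simp add: coord_sum_sum)
  then show ?thesis using assms(1) by (simp add: bit_of_nat)
qed

lemma coord_sum_unit_vec: "finite J \<Longrightarrow> coord_sum J (unit_vec a) = (if a \<in> J then 1 else 0)"
  by (simp add: coord_sum_def unit_vec_def)

lemma not_in_span_if_coord_sum:
  assumes "\<forall>v\<in>S. coord_sum J v = 0" and "coord_sum J y = 1"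
  shows "y \<notin> gf2.span S"
proof -
  have "gf2.subspace {v. coord_sum J v = 0}"
    unfolding gf2.subspace_def
    by (auto simp: coord_sum_def sum.distrib gscale_def sum_distrib_left[symmetric])
  then have "gf2.span S \<subseteq> {v. coord_sum J v = 0}"
    by (rule gf2.span_minimal[rotated]) (use assms(1) in auto)
  then show ?thesis using assms(2) by auto
qed

lemma independent_insert_if_coord_sum:
  "gf2.independent S \<Longrightarrow> \<forall>v\<in>S. coord_sum J v = 0 \<Longrightarrow> coord_sum J y = 1 \<Longrightarrow>
    gf2.independent (insert y S)"
  using gf2.independent_insertI not_in_span_if_coord_sum by metis

lemma in_span_iff_subset_sum:
  assumes "finite V"
  shows "v \<in> gf2.span V \<longleftrightarrow> (\<exists>S\<subseteq>V. v = (\<Sum>x\<in>S. x))"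
proof
  assume "v \<in> gf2.span V"
  then obtain u where u: "v = (\<Sum>x\<in>V. gscale (u x) x)"
    using gf2.span_finite[OF assms] by blast
  have "(\<Sum>x\<in>V. gscale (u x) x) = (\<Sum>x\<in>V. if u x = 1 then x else 0)"
    by (rule sum.cong) (auto simp: gscale_def fun_eq_iff)
  also have "\<dots> = (\<Sum>x\<in>{x\<in>V. u x = 1}. x)"
    using sum.inter_filter[OF assms, of "\<lambda>x. x" "\<lambda>x. u x = 1"] by simp
  finally have "v = (\<Sum>x\<in>{x\<in>V. u x = 1}. x)" using u by simp
  then show "\<exists>S\<subseteq>V. v = (\<Sum>x\<in>S. x)" by (intro exI[of _ "{x\<in>V. u x = 1}"]) auto
next
  assume "\<exists>S\<subseteq>V. v = (\<Sum>x\<in>S. x)"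
  then obtain S where "S \<subseteq> V" "v = (\<Sum>x\<in>S. x)" by blast
  then show "v \<in> gf2.span V" by (metis gf2.span_base gf2.span_sum subsetD)
qed

text \<open>Over GF(2) the circuits of a vector configuration are exactly these sets.\<close>
definition zero_sum_circuit :: "vec set \<Rightarrow> bool" where
  "zero_sum_circuit T \<longleftrightarrow> finite T \<and> (\<Sum>v\<in>T. v) = 0 \<and> (\<exists>a\<in>T. gf2.independent (T - {a}))"

lemma zero_sum_circuit_dependent:
  assumes "zero_sum_circuit T"
  shows "gf2.dependent T"
proof -
  obtain a where "finite T" "(\<Sum>v\<in>T. v) = 0" "a \<in> T"
    using assms unfolding zero_sum_circuit_def by blast
  then show ?thesis
    unfolding gf2.dependent_finite[OF \<open>finite T\<close>] by (intro exI[of _ "\<lambda>_. 1"]) auto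
qed

lemma zero_sum_circuit_relation_const:
  assumes T: "zero_sum_circuit T" and rel: "(\<Sum>v\<in>T. gscale (c v) v) = 0"
    and "v \<in> T" "w \<in> T"
  shows "c v = c w"
proof -
  obtain a where fin: "finite T" and sum0: "(\<Sum>v\<in>T. v) = 0"
    and a: "a \<in> T" and indep: "gf2.independent (T - {a})"
    using T unfolding zero_sum_circuit_def by blast
  define d where "d v = c v + c a" for v
  have "(\<Sum>v\<in>T. gscale (d v) v) = (\<Sum>v\<in>T. gscale (c v) v) + gscale (c a) (\<Sum>v\<in>T. v)"
    by (simp add: d_def gf2.scale_left_distrib sum.distrib gf2.scale_sum_right)
  also have "\<dots> = 0" using rel sum0 by simp
  finally have "(\<Sum>v\<in>T. gscale (d v) v) = 0" .
  moreover have "d a = 0" by (simp add: d_def)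
  ultimately have "(\<Sum>v\<in>T - {a}. gscale (d v) v) = 0"
    using sum.remove[OF fin a, of "\<lambda>v. gscale (d v) v"] by simp
  then have "\<forall>x\<in>T - {a}. d x = 0"
    using gf2.independentD[OF indep] fin by blast
  then have "\<forall>x\<in>T. c x = c a"
    by (auto simp: d_def bit_add_eq_0_iff)
  then show ?thesis using assms(3,4) by simp
qed

lemma zero_sum_circuit_psubset_independent:
  assumes T: "zero_sum_circuit T" and "S \<subset> T"
  shows "gf2.independent S"
proof -
  have fin: "finite T" using T by (simp add: zero_sum_circuit_def)
  obtain w where w: "w \<in> T" "w \<notin> S" using assms(2) by blast
  show ?thesis
  proof (rule gf2.independent_if_scalars_zero)
    show "finite S" using fin assms(2) finite_subset by blast
    fix c x assume rel: "(\<Sum>v\<in>S. gscale (c v) v) = 0" and x: "x \<in> S"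
    define c' where "c' v = (if v \<in> S then c v else 0)" for v
    have "(\<Sum>v\<in>T. gscale (c' v) v) = (\<Sum>v\<in>S. gscale (c' v) v)"
      by (rule sum.mono_neutral_right[OF fin]) (use assms(2) in \<open>auto simp: c'_def\<close>)
    also have "\<dots> = 0" using rel by (simp add: c'_def)
    finally have "c' x = c' w"
      by (rule zero_sum_circuit_relation_const[OF T]) (use x w assms(2) in auto)
    then show "c x = 0" using x w by (simp add: c'_def)
  qed
qed

lemma zero_sum_circuit_insert_sum:
  assumes "finite S" and indep: "gf2.independent S" and "2 \<le> card S"
  shows "(\<Sum>v\<in>S. v) \<notin> S" and "zero_sum_circuit (insert (\<Sum>v\<in>S. v) S)"
proof -
  let ?d = "\<Sum>v\<in>S. v"
  show notin: "?d \<notin> S"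
  proof
    assume d: "?d \<in> S"
    then have "?d + (\<Sum>v\<in>S - {?d}. v) = ?d + 0"
      using sum.remove[OF assms(1) d, of "\<lambda>v. v"] by simp
    then have "(\<Sum>v\<in>S - {?d}. gscale 1 v) = 0" by (simp only: add_left_cancel gf2.scale_one)
    moreover have "card (S - {?d}) \<noteq> 0" using assms(3) d by simp
    then obtain w where "w \<in> S - {?d}" by (metis card.empty ex_in_conv)
    ultimately show False
      using gf2.independentD[OF indep, of "S - {?d}" "\<lambda>_. 1"] assms(1) by auto
  qed
  show "zero_sum_circuit (insert ?d S)"
    unfolding zero_sum_circuit_def using notin indep assms(1) by auto
qed

lemma in_span_if_coord_sum:
  assumes "finite V" and indep: "gf2.independent V" and J0: "\<forall>v\<in>V. coord_sum J v = 0"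
    and w: "coord_sum J w = 0" and y: "coord_sum J y = 1"
    and supp: "\<forall>v\<in>insert y (insert w V). supported_below (Suc (card V)) v"
  shows "w \<in> gf2.span V"
proof (rule ccontr)
  assume ns: "w \<notin> gf2.span V"
  then have new: "w \<notin> V" by (rule contrapos_nn) (rule gf2.span_base)
  have J0': "\<forall>v\<in>insert w V. coord_sum J v = 0" using J0 w by simp
  have "gf2.independent (insert y (insert w V))"
    by (rule independent_insert_if_coord_sum[OF gf2.independent_insertI[OF ns indep] J0' y])
  then have "card (insert y (insert w V)) \<le> Suc (card V)"
    using independent_supported_below_card_le supp by blast
  moreover have "y \<notin> insert w V" using J0' y zero_neq_one by metis
  ultimately show False using new \<open>finite V\<close> by simp
qed

lemma zero_sum_circuit_subset_sum_through:
  assumes T: "zero_sum_circuit T" and "w \<in> gf2.span T" "w \<noteq> 0" "x \<in> T"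
  shows "\<exists>Q\<subseteq>T. gf2.independent Q \<and> (\<Sum>v\<in>Q. v) = w \<and> x \<in> Q"
proof -
  have fin: "finite T" and sum0: "(\<Sum>v\<in>T. v) = 0" using T by (auto simp: zero_sum_circuit_def)
  obtain S where S: "S \<subseteq> T" "w = (\<Sum>v\<in>S. v)"
    using in_span_iff_subset_sum[OF fin] assms(2) by blast
  have "(\<Sum>v\<in>T - S. v) + (\<Sum>v\<in>S. v) = 0"
    using sum.subset_diff[of S T "\<lambda>v. v"] S(1) fin sum0 by auto
  then have complement: "(\<Sum>v\<in>T - S. v) = w" using S(2) by (simp only: vec_add_eq_0_iff)
  have "S \<noteq> T" "S \<noteq> {}" using S(2) sum0 \<open>w \<noteq> 0\<close> by auto
  then have "gf2.independent S" "gf2.independent (T - S)"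
    using zero_sum_circuit_psubset_independent[OF T] S(1) by blast+
  then show ?thesis
    using S complement \<open>x \<in> T\<close> by (cases "x \<in> S") blast+
qed

lemma zero_sum_circuit_through:
  assumes T: "zero_sum_circuit T" and J0: "\<forall>v\<in>T. coord_sum J v = 0"
    and y: "coord_sum J y = 1" and y': "coord_sum J y' = 1" and "y \<noteq> y'"
    and supp: "\<forall>v\<in>insert y (insert y' T). supported_below (card T) v" and "x \<in> T"
  shows "\<exists>C. zero_sum_circuit C \<and> x \<in> C \<and> y \<in> C \<and> C \<subseteq> insert y (insert y' T)"
proof -
  obtain a where fin: "finite T" and a: "a \<in> T" and indep: "gf2.independent (T - {a})"
    using T unfolding zero_sum_circuit_def by blast
  have "Suc (card (T - {a})) = card T" by (rule card_Suc_Diff1[OF fin a])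
  then have "y + y' \<in> gf2.span (T - {a})"
    using fin indep J0 y y' supp
    by (intro in_span_if_coord_sum[where J = J and y = y]) (auto simp: coord_sum_add supported_below_def)
  moreover have "y + y' \<noteq> 0" using \<open>y \<noteq> y'\<close> by (simp only: vec_add_eq_0_iff) simp
  ultimately obtain Q where Q: "Q \<subseteq> T" "gf2.independent Q" "(\<Sum>v\<in>Q. v) = y + y'" "x \<in> Q"
    using zero_sum_circuit_subset_sum_through[OF T _ _ \<open>x \<in> T\<close>] gf2.span_mono[of "T - {a}" T]
    by blast
  have yQ: "y \<notin> Q" "y' \<notin> Q" using Q(1) J0 y y' by auto
  have "zero_sum_circuit (insert y (insert y' Q))"
    unfolding zero_sum_circuit_def
  proof (intro conjI bexI)
    show "finite (insert y (insert y' Q))" using Q(1) fin finite_subset by blast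
    then have "(\<Sum>v\<in>insert y (insert y' Q). v) = (y + y') + (\<Sum>v\<in>Q. v)"
      using yQ \<open>y \<noteq> y'\<close> by (simp add: add.assoc)
    then show "(\<Sum>v\<in>insert y (insert y' Q). v) = 0"
      using Q(3) by simp
    have "gf2.independent (insert y' Q)"
      using independent_insert_if_coord_sum[OF Q(2)] Q(1) J0 y' by blast
    then show "gf2.independent (insert y (insert y' Q) - {y})"
      using yQ \<open>y \<noteq> y'\<close> by (simp add: insert_Diff_if)
  qed simp
  then show ?thesis using Q(1,4) by blast
qed

definition kill_coords :: "nat set \<Rightarrow> vec \<Rightarrow> vec" where
  "kill_coords K v = (\<lambda>i. if i \<in> K then 0 else v i)"

lemma kill_coords_combination:
  "kill_coords K (\<Sum>x\<in>A. gscale (c x) (g x)) = (\<Sum>x\<in>A. gscale (c x) (kill_coords K (g x)))"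
  by (simp add: kill_coords_def fun_eq_iff sum_vec_apply gscale_def)

lemma kill_coords_add: "kill_coords K (v + w) = kill_coords K v + kill_coords K w"
  by (simp add: kill_coords_def fun_eq_iff)

lemma kill_coords_0 [simp]: "kill_coords K 0 = 0"
  by (simp add: kill_coords_def fun_eq_iff)

lemma kill_coords_unit_vec: "j \<in> K \<Longrightarrow> kill_coords K (unit_vec j) = 0"
  by (auto simp: kill_coords_def unit_vec_def fun_eq_iff)

lemma independent_kill_coords_if_Un_unit_vecs:
  assumes K: "finite K" and S: "finite S" and disj: "S \<inter> unit_vec ` K = {}"
    and inj: "inj_on (kill_coords K) S" and indep: "gf2.independent (S \<union> unit_vec ` K)"
  shows "gf2.independent (kill_coords K ` S)"
proof (rule gf2.independent_if_scalars_zero)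
  let ?U = "unit_vec ` K"
  show "finite (kill_coords K ` S)" using S by simp
  fix c w assume rel: "(\<Sum>x\<in>kill_coords K ` S. gscale (c x) x) = 0" and w: "w \<in> kill_coords K ` S"
  define s where "s = (\<Sum>v\<in>S. gscale (c (kill_coords K v)) v)"
  have killed: "kill_coords K s = 0"
    using rel by (simp add: s_def kill_coords_combination sum.reindex[OF inj])
  have "s i = 0" if "i \<notin> K" for i
    using fun_cong[OF killed, of i] that by (simp add: kill_coords_def)
  then have "s \<in> gf2.span ?U" by (rule in_span_unit_vecs[OF K])
  then obtain a where a: "s = (\<Sum>u\<in>?U. gscale (a u) u)"
    using gf2.span_finite[OF finite_imageI[OF K]] by blast
  define d where "d x = (if x \<in> S then c (kill_coords K x) else a x)" for x
  have "(\<Sum>x\<in>S \<union> ?U. gscale (d x) x) = (\<Sum>x\<in>S. gscale (d x) x) + (\<Sum>x\<in>?U. gscale (d x) x)"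
    by (rule sum.union_disjoint[OF S finite_imageI[OF K] disj])
  also have "(\<Sum>x\<in>S. gscale (d x) x) = s" by (simp add: s_def d_def)
  also have "(\<Sum>x\<in>?U. gscale (d x) x) = s"
    unfolding a by (rule sum.cong) (use disj in \<open>auto simp: d_def\<close>)
  finally have "(\<Sum>x\<in>S \<union> ?U. gscale (d x) x) = 0" by (simp only: vec_add_self)
  then have "\<forall>x\<in>S. d x = 0"
    using gf2.independentD[OF indep] S finite_imageI[OF K] by blast
  then show "c w = 0" using w by (auto simp: d_def)
qed

lemma independent_Un_unit_vecs_if_kill_coords:
  assumes K: "finite K" and S: "finite S" and disj: "S \<inter> unit_vec ` K = {}"
    and inj: "inj_on (kill_coords K) S" and indep: "gf2.independent (kill_coords K ` S)"
  shows "gf2.independent (S \<union> unit_vec ` K)"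
proof (rule gf2.independent_if_scalars_zero)
  let ?U = "unit_vec ` K"
  have split: "(\<Sum>x\<in>S \<union> ?U. g x) = (\<Sum>x\<in>S. g x) + (\<Sum>x\<in>?U. g x)" for g :: "vec \<Rightarrow> vec"
    by (rule sum.union_disjoint[OF S finite_imageI[OF K] disj])
  show "finite (S \<union> ?U)" using S K by simp
  fix c x assume rel: "(\<Sum>x\<in>S \<union> ?U. gscale (c x) x) = 0" and x: "x \<in> S \<union> ?U"
  have "kill_coords K (\<Sum>x\<in>?U. gscale (c x) x) = 0"
    unfolding kill_coords_combination by (rule sum.neutral) (auto simp: kill_coords_unit_vec)
  moreover have "kill_coords K (\<Sum>x\<in>S. gscale (c x) x) + kill_coords K (\<Sum>x\<in>?U. gscale (c x) x) = 0"
    using rel by (simp add: split kill_coords_add[symmetric])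
  ultimately have "(\<Sum>v\<in>S. gscale (c v) (kill_coords K v)) = 0"
    by (simp add: kill_coords_combination)
  then have "(\<Sum>w\<in>kill_coords K ` S. gscale (c (inv_into S (kill_coords K) w)) w) = 0"
    using inj by (simp add: sum.reindex)
  then have cS: "c v = 0" if "v \<in> S" for v
    using gf2.independentD[OF indep, of "kill_coords K ` S"] S inj that by force
  then have "(\<Sum>x\<in>?U. gscale (c x) x) = 0" using rel by (simp add: split)
  then have "c u = 0" if "u \<in> ?U" for u
    using gf2.independentD[OF independent_unit_vecs[OF K]] finite_imageI[OF K] that by blast
  then show "c x = 0" using cS x by blast
qed

text \<open>Contracting the coordinate vectors of \<open>K\<close> amounts to projecting away the coordinates
  in \<open>K\<close>.\<close>
lemma independent_Un_unit_vecs_iff: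
  assumes "finite K" "finite S" "S \<inter> unit_vec ` K = {}" "inj_on (kill_coords K) S"
  shows "gf2.independent (S \<union> unit_vec ` K) \<longleftrightarrow> gf2.independent (kill_coords K ` S)"
  using independent_kill_coords_if_Un_unit_vecs[OF assms] independent_Un_unit_vecs_if_kill_coords[OF assms]
  by (rule iffI)

section \<open>Matroid facts\<close>

lemma maximal_sets_exists_superset:
  assumes "finite E" "I \<in> F" "\<forall>J\<in>F. J \<subseteq> E"
  shows "\<exists>B\<in>maximal_sets F. I \<subseteq> B"
proof -
  have "finite F" using assms(1,3) finite_subset[of F "Pow E"] by auto
  then obtain B where "B \<in> F" "I \<subseteq> B" "\<forall>b\<in>F. B \<subseteq> b \<longrightarrow> B = b"
    using finite_has_maximal2[OF _ assms(2)] by blast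
  then show ?thesis unfolding maximal_sets_def by auto
qed

lemma maximal_sets_bij_image_iff:
  assumes bij: "bij_betw \<phi> A B" and XA: "X \<subseteq> A"
  shows "X \<in> maximal_sets {I. I \<subseteq> A \<and> Q (\<phi> ` I)} \<longleftrightarrow> \<phi> ` X \<in> maximal_sets {I. I \<subseteq> B \<and> Q I}"
proof -
  have inj: "inj_on \<phi> A" and im: "\<phi> ` A = B" using bij unfolding bij_betw_def by auto
  have preimage: "\<phi> ` {x\<in>A. \<phi> x \<in> J} = J" if "J \<subseteq> B" for J using that im by auto
  have "(\<forall>J. J \<subseteq> A \<longrightarrow> Q (\<phi> ` J) \<longrightarrow> X \<subseteq> J \<longrightarrow> J = X) \<longleftrightarrow>
        (\<forall>J. J \<subseteq> B \<longrightarrow> Q J \<longrightarrow> \<phi> ` X \<subseteq> J \<longrightarrow> J = \<phi> ` X)"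
  proof (intro iffI allI impI)
    fix J assume maxX: "\<forall>J. J \<subseteq> A \<longrightarrow> Q (\<phi> ` J) \<longrightarrow> X \<subseteq> J \<longrightarrow> J = X"
      and J: "J \<subseteq> B" "Q J" "\<phi> ` X \<subseteq> J"
    have "X \<subseteq> {x\<in>A. \<phi> x \<in> J}" using XA J(3) by auto
    then have "{x\<in>A. \<phi> x \<in> J} = X"
      using maxX preimage[OF J(1)] J(2) by simp
    then show "J = \<phi> ` X" using preimage[OF J(1)] by simp
  next
    fix J assume maxY: "\<forall>J. J \<subseteq> B \<longrightarrow> Q J \<longrightarrow> \<phi> ` X \<subseteq> J \<longrightarrow> J = \<phi> ` X"
      and J: "J \<subseteq> A" "Q (\<phi> ` J)" "X \<subseteq> J"
    have "\<phi> ` J \<subseteq> B" using J(1) im by auto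
    then have "\<phi> ` J = \<phi> ` X" using maxY J(2) image_mono[OF J(3), of \<phi>] by simp
    then show "J = X" using inj_on_image_eq_iff[OF inj J(1) XA] by simp
  qed
  then show ?thesis unfolding maximal_sets_def using XA im by auto
qed

lemma exists_image_neq:
  assumes "2 \<le> card (f ` Z)" "b \<in> Z"
  shows "\<exists>b'\<in>Z. f b' \<noteq> f b"
proof (rule ccontr)
  assume "\<not> ?thesis"
  then have "f ` Z \<subseteq> {f b}" by auto
  then show False using card_mono[of "{f b}" "f ` Z"] assms(1) by simp
qed

lemma finite_card_indep_subsets: "finite X \<Longrightarrow> finite {card I | I. I \<subseteq> X \<and> indep M I}"
  by (rule finite_subset[of _ "card ` Pow X"]) auto

lemma rank_ge_card: "finite X \<Longrightarrow> I \<subseteq> X \<Longrightarrow> indep M I \<Longrightarrow> card I \<le> rank M X"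
  unfolding rank_def by (rule Max_ge[OF finite_card_indep_subsets]) auto

lemma rank_le:
  assumes "finite X" "indep M {}" "\<And>I. I \<subseteq> X \<Longrightarrow> indep M I \<Longrightarrow> card I \<le> n"
  shows "rank M X \<le> n"
  unfolding rank_def by (rule Max.boundedI[OF finite_card_indep_subsets]) (use assms in auto)

lemma rank_circuit:
  assumes circ: "circuit M X" and "finite X" "a \<in> X"
  shows "rank M X + 1 = card X"
proof -
  have "X - {a} \<subset> X" "{} \<subset> X" using \<open>a \<in> X\<close> by auto
  then have "indep M (X - {a})" "indep M {}" using circ unfolding circuit_def by simp_all
  have "rank M X \<le> card (X - {a})"
  proof (rule rank_le[OF \<open>finite X\<close> \<open>indep M {}\<close>])
    fix I assume "I \<subseteq> X" "indep M I"
    then have "I \<noteq> X" using circ unfolding circuit_def by auto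
    then have "card I < card X" using \<open>I \<subseteq> X\<close> psubset_card_mono[OF \<open>finite X\<close>] by auto
    then show "card I \<le> card (X - {a})" using card_Suc_Diff1[OF \<open>finite X\<close> \<open>a \<in> X\<close>] by simp
  qed
  moreover have "card (X - {a}) \<le> rank M X"
    using rank_ge_card[OF \<open>finite X\<close> _ \<open>indep M (X - {a})\<close>] by blast
  ultimately show ?thesis using card_Suc_Diff1[OF \<open>finite X\<close> \<open>a \<in> X\<close>] by simp
qed

lemma connected_matroidI_cross_circuits:
  assumes "ground M = X \<union> Y" "circuit M X" "circuit M Y"
    and cross: "\<And>a b. a \<in> X \<Longrightarrow> b \<in> Y \<Longrightarrow> \<exists>C. circuit M C \<and> a \<in> C \<and> b \<in> C"
  shows "connected_matroid M"
  unfolding connected_matroid_def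
proof (intro ballI impI)
  fix a b assume "a \<in> ground M" "b \<in> ground M"
  then consider "a \<in> X" "b \<in> X" | "a \<in> Y" "b \<in> Y" | "a \<in> X" "b \<in> Y" | "a \<in> Y" "b \<in> X"
    using assms(1) by blast
  then show "\<exists>C. circuit M C \<and> a \<in> C \<and> b \<in> C"
    by cases (use assms(2,3) cross in blast)+
qed

lemma indep_relax_iff:
  "indep (E, bases M \<union> {X, Y}) I \<longleftrightarrow> indep M I \<or> I \<subseteq> X \<or> I \<subseteq> Y"
  unfolding indep_def by (auto simp: bases_def)

text \<open>An independent \<open>C\<close> is its own basis of \<open>M|C\<close>.\<close>
lemma is_minor_contract_indep:
  assumes "C \<subseteq> ground M" "D \<subseteq> ground M" "C \<inter> D = {}" "indep M C"
  shows "is_minor (ground M - C - D,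
            maximal_sets {I. I \<subseteq> ground M - C - D \<and> indep M (I \<union> C)}) M"
  unfolding is_minor_def
proof (intro exI conjI)
  show "C \<in> maximal_sets {I. I \<subseteq> C \<and> indep M I}"
    unfolding maximal_sets_def using assms(4) by auto
qed (use assms in auto)

section \<open>Vector matroids over GF(2)\<close>

definition vec_matroid :: "'a set \<Rightarrow> ('a \<Rightarrow> vec) \<Rightarrow> 'a matroid" where
  "vec_matroid E f = (E, maximal_sets {I. I \<subseteq> E \<and> gf2.independent (f ` I)})"

lemma ground_vec_matroid [simp]: "ground (vec_matroid E f) = E"
  by (simp add: vec_matroid_def ground_def)

lemma bases_vec_matroid: "bases (vec_matroid E f) = maximal_sets {I. I \<subseteq> E \<and> gf2.independent (f ` I)}"
  by (simp add: vec_matroid_def bases_def)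

context
  fixes E :: "'a set" and f :: "'a \<Rightarrow> vec"
  assumes fin: "finite E" and inj: "inj_on f E"
begin

lemma indep_vec_matroid_iff: "indep (vec_matroid E f) I \<longleftrightarrow> I \<subseteq> E \<and> gf2.independent (f ` I)"
proof
  assume "indep (vec_matroid E f) I"
  then obtain B where "B \<subseteq> E" and indepB: "gf2.independent (f ` B)" and "I \<subseteq> B"
    unfolding indep_def bases_vec_matroid maximal_sets_def by blast
  then show "I \<subseteq> E \<and> gf2.independent (f ` I)"
    using gf2.independent_mono[OF indepB image_mono] by blast
next
  assume "I \<subseteq> E \<and> gf2.independent (f ` I)"
  then show "indep (vec_matroid E f) I"
    unfolding indep_def bases_vec_matroid by (intro maximal_sets_exists_superset[OF fin]) auto
qed

lemma in_span_basis:
  assumes B: "B \<in> bases (vec_matroid E f)" and z: "z \<in> E"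
  shows "f z \<in> gf2.span (f ` B)"
proof (cases "z \<in> B")
  case True
  then show ?thesis by (simp add: gf2.span_base)
next
  case False
  have BE: "B \<subseteq> E" and indep: "gf2.independent (f ` B)"
    and max: "\<And>J. J \<subseteq> E \<Longrightarrow> gf2.independent (f ` J) \<Longrightarrow> B \<subseteq> J \<Longrightarrow> J = B"
    using B unfolding bases_vec_matroid maximal_sets_def by auto
  have "\<not> gf2.independent (f ` insert z B)"
    using max[of "insert z B"] BE z False by blast
  moreover have "f z \<notin> f ` B"
    using inj BE z False by (auto simp: inj_on_def)
  ultimately show ?thesis using indep gf2.independent_insert[of "f z" "f ` B"] by simp
qed

lemma basis_if_spanning:
  assumes IE: "I \<subseteq> E" and indep: "gf2.independent (f ` I)" and spans: "f ` E \<subseteq> gf2.span (f ` I)"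
  shows "I \<in> bases (vec_matroid E f)"
  unfolding bases_vec_matroid maximal_sets_def
proof (intro CollectI conjI allI ballI impI)
  fix J assume "J \<in> {I. I \<subseteq> E \<and> gf2.independent (f ` I)}" and "I \<subseteq> J"
  then have JE: "J \<subseteq> E" and indepJ: "gf2.independent (f ` J)" and IJ: "I \<subseteq> J" by auto
  show "J = I"
  proof (rule ccontr)
    assume "J \<noteq> I"
    then obtain z where z: "z \<in> J" "z \<notin> I" using IJ by blast
    have "f z \<notin> f ` I" using inj IE JE z by (auto simp: inj_on_def)
    moreover have "insert (f z) (f ` I) \<subseteq> f ` J" using z(1) IJ by auto
    then have "gf2.independent (insert (f z) (f ` I))" by (rule gf2.independent_mono[OF indepJ])
    ultimately have "f z \<notin> gf2.span (f ` I)" using gf2.independent_insert by auto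
    then show False using spans JE z(1) by auto
  qed
qed (use IE indep in auto)

lemma basis_exchange_vec_matroid:
  assumes B1: "B1 \<in> bases (vec_matroid E f)" and B2: "B2 \<in> bases (vec_matroid E f)"
    and x: "x \<in> B1 - B2"
  shows "\<exists>y\<in>B2 - B1. insert y (B1 - {x}) \<in> bases (vec_matroid E f)"
proof -
  let ?S = "B1 - {x}"
  have B1E: "B1 \<subseteq> E" and indep1: "gf2.independent (f ` B1)"
    using B1 unfolding bases_vec_matroid maximal_sets_def by auto
  have B2E: "B2 \<subseteq> E" using B2 unfolding bases_vec_matroid maximal_sets_def by auto
  have fB1: "f ` B1 = insert (f x) (f ` ?S)" using x by auto
  have "f x \<notin> f ` ?S" using inj B1E x by (auto simp: inj_on_def)
  then have x_new: "f x \<notin> gf2.span (f ` ?S)"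
    using indep1 fB1 gf2.independent_insert[of "f x" "f ` ?S"] by simp
  have "\<exists>y\<in>B2. f y \<notin> gf2.span (f ` ?S)"
  proof (rule ccontr)
    assume "\<not> ?thesis"
    then have "gf2.span (f ` B2) \<subseteq> gf2.span (f ` ?S)"
      by (intro gf2.span_minimal) auto
    then show False using in_span_basis[OF B2] x B1E x_new by auto
  qed
  then obtain y where y: "y \<in> B2" "f y \<notin> gf2.span (f ` ?S)" by blast
  have yS: "y \<notin> ?S" using y(2) by (meson gf2.span_base imageI)
  have yB1: "y \<in> B2 - B1" using x y(1) yS by auto
  have indepT: "gf2.independent (f ` insert y ?S)"
    using gf2.independent_insertI[OF y(2)] indep1 gf2.independent_mono[of "f ` B1" "f ` ?S"] by auto
  have "f x \<in> gf2.span (f ` insert y ?S)"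
    using in_span_basis[OF B1, of y] yB1 B2E y(2) gf2.in_span_insert[of "f y" "f x" "f ` ?S"] fB1
    by auto
  then have "f ` B1 \<subseteq> gf2.span (f ` insert y ?S)"
    using fB1 gf2.span_base[of _ "f ` insert y ?S"] by auto
  then have "gf2.span (f ` B1) \<subseteq> gf2.span (f ` insert y ?S)"
    by (intro gf2.span_minimal) auto
  then have "f ` E \<subseteq> gf2.span (f ` insert y ?S)"
    using in_span_basis[OF B1] by auto
  then have "insert y ?S \<in> bases (vec_matroid E f)"
    by (rule basis_if_spanning[rotated 2]) (use yB1 B1E B2E indepT in auto)
  then show ?thesis using yB1 by blast
qed

lemma matroid_vec_matroid: "matroid (vec_matroid E f)"
  unfolding matroid_def
proof (intro conjI ballI)
  have "\<exists>B\<in>bases (vec_matroid E f). {} \<subseteq> B"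
    unfolding bases_vec_matroid
    by (rule maximal_sets_exists_superset[OF fin]) (auto simp: gf2.independent_empty)
  then show "bases (vec_matroid E f) \<noteq> {}" by blast
  show "\<And>B. B \<in> bases (vec_matroid E f) \<Longrightarrow> B \<subseteq> ground (vec_matroid E f)"
    unfolding bases_vec_matroid maximal_sets_def by auto
qed (use fin basis_exchange_vec_matroid in auto)

lemma binary_vec_matroid: "binary (vec_matroid E f)"
  unfolding binary_def
proof (intro exI allI impI)
  fix I assume "I \<subseteq> ground (vec_matroid E f)"
  then have "I \<subseteq> E" "finite I" "inj_on f I" using fin inj finite_subset inj_on_subset by auto
  then show "indep (vec_matroid E f) I \<longleftrightarrow> gf2_lin_indep f I"
    by (simp add: indep_vec_matroid_iff gf2_lin_indep_iff_independent)
qed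

lemma circuit_vec_matroidI:
  assumes CE: "C \<subseteq> E" and circ: "zero_sum_circuit (f ` C)"
  shows "circuit (vec_matroid E f) C"
  unfolding circuit_def ground_vec_matroid indep_vec_matroid_iff
proof (intro conjI allI impI)
  show "\<not> (C \<subseteq> E \<and> gf2.independent (f ` C))"
    using zero_sum_circuit_dependent[OF circ] by blast
  fix C' assume C': "C' \<subset> C"
  then show "C' \<subseteq> E" using CE by blast
  have "inj_on f C" using inj CE inj_on_subset by blast
  then have "f ` C' \<subset> f ` C"
    using C' by (metis image_mono inj_on_image_eq_iff psubset_eq subset_iff_psubset_eq)
  then show "gf2.independent (f ` C')" by (rule zero_sum_circuit_psubset_independent[OF circ])
qed (rule CE)

lemma rank_vec_matroid_le:
  assumes "Z \<subseteq> E" and supp: "\<forall>x\<in>E. supported_below R (f x)"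
  shows "rank (vec_matroid E f) Z \<le> R"
proof (rule rank_le)
  show "finite Z" using assms(1) fin finite_subset by blast
  show "indep (vec_matroid E f) {}"
    by (simp add: indep_vec_matroid_iff gf2.independent_empty)
  fix I assume "I \<subseteq> Z" "indep (vec_matroid E f) I"
  then have IE: "I \<subseteq> E" and "gf2.independent (f ` I)"
    using assms(1) indep_vec_matroid_iff by auto
  then have "card (f ` I) \<le> R"
    using independent_supported_below_card_le supp by blast
  then show "card I \<le> R" using card_image inj_on_subset[OF inj IE] by metis
qed

lemma circuit_hyperplane_vec_matroidI:
  assumes XE: "X \<subseteq> E" and circ: "zero_sum_circuit (f ` X)" and card: "card (f ` X) = R"
    and J0: "\<forall>x\<in>X. coord_sum J (f x) = 0" and J1: "\<forall>y\<in>E - X. coord_sum J (f y) = 1"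
    and supp: "\<forall>x\<in>E. supported_below R (f x)" and other: "y0 \<in> E - X"
  shows "circuit_hyperplane (vec_matroid E f) X"
proof -
  let ?M = "vec_matroid E f"
  have finX: "finite X" using XE fin finite_subset by blast
  have cardX: "card X = R" using card card_image[OF inj_on_subset[OF inj XE]] by simp
  have circX: "circuit ?M X" by (rule circuit_vec_matroidI[OF XE circ])
  obtain a where a: "a \<in> X" using circ by (auto simp: zero_sum_circuit_def)
  have rankX: "rank ?M X + 1 = R" using rank_circuit[OF circX finX a] cardX by simp
  have "indep ?M (X - {a})" using circX a unfolding circuit_def by blast
  then have indep0: "gf2.independent (f ` (X - {a}))" by (simp add: indep_vec_matroid_iff)
  have big: "R \<le> rank ?M Z" if y: "y \<in> E - X" and Z: "insert y X \<subseteq> Z" "Z \<subseteq> E" for y Z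
  proof -
    have "gf2.independent (insert (f y) (f ` (X - {a})))"
      by (rule independent_insert_if_coord_sum[OF indep0]) (use J0 J1 y in auto)
    then have "indep ?M (insert y (X - {a}))"
      using XE y by (auto simp: indep_vec_matroid_iff)
    moreover have "card (insert y (X - {a})) = R"
      using y finX a cardX card_Suc_Diff1[OF finX a] by simp
    moreover have "insert y (X - {a}) \<subseteq> Z" using Z by blast
    ultimately show ?thesis using rank_ge_card[OF finite_subset[OF Z(2) fin]] by metis
  qed
  have "flat ?M X"
    unfolding flat_def ground_vec_matroid
  proof (intro conjI ballI)
    fix y assume "y \<in> E - X"
    then show "rank ?M X < rank ?M (insert y X)" using big[of y "insert y X"] rankX XE by auto
  qed (rule XE)
  moreover have "rank ?M E = R"
    using rank_vec_matroid_le[OF order_refl supp] big[OF other _ order_refl] other XE by auto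
  ultimately show ?thesis
    unfolding circuit_hyperplane_def hyperplane_def ground_vec_matroid
    using circX rankX by simp
qed

lemma cross_circuit_vec_matroid:
  assumes XE: "X \<subseteq> E" and circ: "zero_sum_circuit (f ` X)"
    and J0: "\<forall>x\<in>X. coord_sum J (f x) = 0"
    and b: "b \<in> E" "coord_sum J (f b) = 1" and b': "b' \<in> E" "coord_sum J (f b') = 1"
    and "f b \<noteq> f b'" and supp: "\<forall>x\<in>E. supported_below (card (f ` X)) (f x)" and a: "a \<in> X"
  shows "\<exists>C. circuit (vec_matroid E f) C \<and> a \<in> C \<and> b \<in> C"
proof -
  have "\<forall>v\<in>f ` X. coord_sum J v = 0" using J0 by simp
  moreover have "\<forall>v\<in>insert (f b) (insert (f b') (f ` X)). supported_below (card (f ` X)) v"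
    using supp XE b b' by auto
  ultimately obtain C' where C': "zero_sum_circuit C'" "f a \<in> C'" "f b \<in> C'"
    "C' \<subseteq> insert (f b) (insert (f b') (f ` X))"
    using zero_sum_circuit_through[OF circ _ b(2) b'(2) \<open>f b \<noteq> f b'\<close> _ imageI[OF a]] by blast
  let ?C = "{z\<in>E. f z \<in> C'}"
  have "f ` ?C = C'" using C'(4) XE b b' by auto
  then have "circuit (vec_matroid E f) ?C" using C'(1) by (intro circuit_vec_matroidI) auto
  then show ?thesis using C'(2,3) a b XE by auto
qed

lemma relax_vec_matroid_in_class_D:
  assumes EXY: "E = X \<union> Y" and disj: "X \<inter> Y = {}"
    and circX: "zero_sum_circuit (f ` X)" and circY: "zero_sum_circuit (f ` Y)"
    and cardX: "card (f ` X) = R" and cardY: "card (f ` Y) = R" and "2 \<le> R"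
    and JX: "\<forall>x\<in>X. coord_sum JX (f x) = 0 \<and> coord_sum JY (f x) = 1"
    and JY: "\<forall>y\<in>Y. coord_sum JX (f y) = 1 \<and> coord_sum JY (f y) = 0"
    and supp: "\<forall>x\<in>E. supported_below R (f x)"
  shows "(E, bases (vec_matroid E f) \<union> {X, Y}) \<in> class_D"
proof -
  let ?M = "vec_matroid E f"
  have "X \<noteq> {}" "Y \<noteq> {}" using cardX cardY \<open>2 \<le> R\<close> by auto
  then obtain x0 y0 where "x0 \<in> X" "y0 \<in> Y" by blast
  have chX: "circuit_hyperplane ?M X"
    by (rule circuit_hyperplane_vec_matroidI[OF _ circX cardX, of JX y0])
       (use EXY disj JX JY supp \<open>y0 \<in> Y\<close> in auto)
  have chY: "circuit_hyperplane ?M Y"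
    by (rule circuit_hyperplane_vec_matroidI[OF _ circY cardY, of JY x0])
       (use EXY disj JX JY supp \<open>x0 \<in> X\<close> in auto)
  have "connected_matroid ?M"
  proof (rule connected_matroidI_cross_circuits)
    show "ground ?M = X \<union> Y" using EXY by simp
    show "circuit ?M X" "circuit ?M Y" using chX chY by (simp_all add: circuit_hyperplane_def)
    fix a b assume a: "a \<in> X" and b: "b \<in> Y"
    obtain b' where "b' \<in> Y" "f b' \<noteq> f b"
      using exists_image_neq[OF _ b, of f] cardY \<open>2 \<le> R\<close> by auto
    then show "\<exists>C. circuit ?M C \<and> a \<in> C \<and> b \<in> C"
      using cross_circuit_vec_matroid[OF _ circX, of JX b b' a] EXY JX JY supp cardX a b
      by auto
  qed
  then show ?thesis
    unfolding class_D_def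
    using matroid_vec_matroid binary_vec_matroid chX chY disj EXY
    by (intro CollectI exI[of _ ?M] exI[of _ X] exI[of _ Y]) simp
qed

end

section \<open>The construction\<close>

definition pg_points :: "nat \<Rightarrow> vec set" where
  "pg_points k = {v. supported_below k v \<and> v \<noteq> 0}"

lemma PG_eq: "PG k = (pg_points k, maximal_sets {I. I \<subseteq> pg_points k \<and> gf2_lin_indep id I})"
  unfolding PG_def pg_points_def supported_below_def Let_def by (simp add: zero_fun_def)

lemma supported_below_eq_image_Pow:
  "{v. supported_below k v} = (\<lambda>S i. if i \<in> S then 1 else 0) ` Pow {..<k}"
proof (intro equalityI subsetI)
  fix v assume "v \<in> {v. supported_below k v}"
  then have "v = (\<lambda>i. if i \<in> {i. v i = 1} then 1 else 0)" and "{i. v i = 1} \<in> Pow {..<k}"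
    by (auto simp: fun_eq_iff supported_below_def not_less[symmetric])
  then show "v \<in> (\<lambda>S i. if i \<in> S then 1 else 0) ` Pow {..<k}" by blast
qed (auto simp: supported_below_def)

lemma card_supported_below: "card {v. supported_below k v} = 2 ^ k"
proof -
  have "inj_on (\<lambda>S i. if i \<in> S then 1 else (0::bit)) (Pow {..<k})"
    by (rule inj_onI) (metis (full_types) one_neq_zero subsetI subset_antisym)
  then show ?thesis
    unfolding supported_below_eq_image_Pow by (simp add: card_image card_Pow)
qed

lemma finite_pg_points: "finite (pg_points k)"
  unfolding pg_points_def using supported_below_eq_image_Pow[of k] by (simp add: finite_image_iff)

lemma card_pg_points: "card (pg_points k) = 2 ^ k - 1"
proof -
  have "pg_points k = {v. supported_below k v} - {0}" by (auto simp: pg_points_def)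
  moreover have "(0::vec) \<in> {v. supported_below k v}" by (simp add: supported_below_def)
  ultimately show ?thesis
    using supported_below_eq_image_Pow[of k] card_supported_below[of k] by simp
qed

locale pg_construction =
  fixes k :: nat and idx :: "vec \<Rightarrow> nat"
  assumes odd_k: "odd k"
    and idx: "bij_betw idx (pg_points k) {..<card (pg_points k)}"
begin

abbreviation "m \<equiv> card (pg_points k)"
definition r :: nat where "r = k + 2 + m"

definition point_coord :: "vec \<Rightarrow> nat" where "point_coord p = k + 2 + idx p"

definition point_vec :: "vec \<Rightarrow> vec" where
  "point_vec p = p + unit_vec k + unit_vec (k + 1) + unit_vec (point_coord p)"

definition s_vec :: "nat \<Rightarrow> vec" where "s_vec i = unit_vec i + unit_vec k"
definition t_vec :: "nat \<Rightarrow> vec" where "t_vec i = unit_vec i + unit_vec (k + 1)"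

definition X_base :: "vec set" where
  "X_base = insert (unit_vec k) (point_vec ` pg_points k \<union> s_vec ` {..<k})"
definition Y_base :: "vec set" where
  "Y_base = unit_vec ` {k + 1..<r} \<union> t_vec ` {..<k}"

definition X_vecs :: "vec set" where "X_vecs = insert (\<Sum>v\<in>X_base. v) X_base"
definition Y_vecs :: "vec set" where "Y_vecs = insert (\<Sum>v\<in>Y_base. v) Y_base"

lemma k_pos: "0 < k"
  using odd_k by (cases k) auto

lemma k_less_r: "k + 1 < r"
  by (simp add: r_def)

lemma point_low: "p \<in> pg_points k \<Longrightarrow> k \<le> i \<Longrightarrow> p i = 0"
  by (simp add: pg_points_def supported_below_def)

lemma point_coord_range: "p \<in> pg_points k \<Longrightarrow> k + 2 \<le> point_coord p \<and> point_coord p < r"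
  using idx by (auto simp: point_coord_def bij_betw_def r_def)

lemma point_coord_eq_iff:
  "p \<in> pg_points k \<Longrightarrow> q \<in> pg_points k \<Longrightarrow> point_coord p = point_coord q \<longleftrightarrow> p = q"
  using idx by (auto simp: point_coord_def bij_betw_def inj_on_def)

lemma point_vec_apply:
  "p \<in> pg_points k \<Longrightarrow> point_vec p i =
    (if i < k then p i else if i = k \<or> i = k + 1 \<or> i = point_coord p then 1 else 0)"
  using point_coord_range[of p] point_low[of p i] by (auto simp: point_vec_def unit_vec_def)

lemma s_vec_apply: "i < k \<Longrightarrow> s_vec i j = (if j = i \<or> j = k then 1 else 0)"
  by (auto simp: s_vec_def unit_vec_def)

lemma t_vec_apply: "i < k \<Longrightarrow> t_vec i j = (if j = i \<or> j = k + 1 then 1 else 0)"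
  by (auto simp: t_vec_def unit_vec_def)

lemma t_vec_neq_unit_vec: "i < k \<Longrightarrow> t_vec i \<noteq> unit_vec j"
  by (auto simp: fun_eq_iff t_vec_apply unit_vec_apply dest!: spec[of _ i] spec[of _ "k + 1"])

lemma X_base_cases:
  assumes "v \<in> X_base"
  obtains "v = unit_vec k" | p where "p \<in> pg_points k" "v = point_vec p" | i where "i < k" "v = s_vec i"
  using assms unfolding X_base_def by blast

lemma Y_base_cases:
  assumes "v \<in> Y_base"
  obtains j where "k + 1 \<le> j" "j < r" "v = unit_vec j" | i where "i < k" "v = t_vec i"
  using assms unfolding Y_base_def by force

lemma finite_X_base: "finite X_base"
  by (simp add: X_base_def finite_pg_points)

lemma finite_Y_base: "finite Y_base"
  by (simp add: Y_base_def)

lemma kill_point_vec: "p \<in> pg_points k \<Longrightarrow> kill_coords {k..<r} (point_vec p) = p"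
  using point_coord_range[of p] point_low[of p]
  by (auto simp: kill_coords_def fun_eq_iff point_vec_apply)

text \<open>Each point vector owns the coordinate \<open>point_coord p\<close>; after them, \<open>s_vec i\<close> is the only
  remaining vector with coordinate \<open>i\<close>, and finally \<open>unit_vec k\<close> is left.\<close>
lemma independent_X_base: "gf2.independent X_base"
proof -
  define level :: "vec \<Rightarrow> nat"
    where "level w = (if w (k + 1) = 1 then 0 else if w = unit_vec k then 2 else 1)" for w
  have "\<exists>j. v j = 1 \<and> (\<forall>w\<in>X_base. w \<noteq> v \<longrightarrow> w j = 1 \<longrightarrow> level w < level v)"
    if "v \<in> X_base" for v
    using that
  proof (cases rule: X_base_cases)
    case 1
    then show ?thesis
      by (intro exI[of _ k])
        (auto elim!: X_base_cases simp: level_def unit_vec_apply point_vec_apply s_vec_apply)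
  next
    case (2 p)
    then show ?thesis
      using point_coord_range[OF 2(1)] point_coord_eq_iff[OF 2(1)]
      by (intro exI[of _ "point_coord p"])
        (auto elim!: X_base_cases simp: level_def unit_vec_apply point_vec_apply s_vec_apply)
  next
    case (3 i)
    then show ?thesis
      by (intro exI[of _ i])
        (auto elim!: X_base_cases simp: level_def unit_vec_apply point_vec_apply s_vec_apply)
  qed
  then show ?thesis by (rule independent_if_echelon[OF finite_X_base])
qed

lemma independent_Y_base: "gf2.independent Y_base"
proof -
  define level :: "vec \<Rightarrow> nat" where "level w = (if w \<in> range unit_vec then 1 else 0)" for w
  have "\<exists>j. v j = 1 \<and> (\<forall>w\<in>Y_base. w \<noteq> v \<longrightarrow> w j = 1 \<longrightarrow> level w < level v)"
    if "v \<in> Y_base" for v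
    using that
  proof (cases rule: Y_base_cases)
    case (1 j)
    have "w \<notin> range unit_vec" if "w \<in> Y_base" "w \<noteq> v" "w j = 1" for w
      using that 1 by (cases rule: Y_base_cases) (auto simp: unit_vec_apply t_vec_neq_unit_vec)
    then show ?thesis using 1 by (intro exI[of _ j]) (auto simp: level_def unit_vec_apply)
  next
    case (2 i)
    then show ?thesis
      by (intro exI[of _ i])
        (auto elim!: Y_base_cases simp: level_def unit_vec_apply t_vec_apply t_vec_neq_unit_vec)
  qed
  then show ?thesis by (rule independent_if_echelon[OF finite_Y_base])
qed

lemma card_X_base: "card X_base = m + k + 1"
proof -
  have inj_point: "inj_on point_vec (pg_points k)"
    by (rule inj_on_inverseI[of _ "kill_coords {k..<r}"]) (rule kill_point_vec)
  have inj_s: "inj_on s_vec {..<k}"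
  proof (rule inj_onI)
    fix i j assume ij: "i \<in> {..<k}" "j \<in> {..<k}" and eq: "s_vec i = s_vec j"
    from fun_cong[OF eq, of i] show "i = j" using ij by (simp add: s_vec_apply split: if_splits)
  qed
  have "point_vec p (k + 1) = 1" if "p \<in> pg_points k" for p
    using that by (simp add: point_vec_apply)
  moreover have "s_vec i (k + 1) = 0" "s_vec i i = 1" if "i < k" for i
    using that by (simp_all add: s_vec_apply)
  moreover have "unit_vec k (k + 1) = 0" "unit_vec k i = 0" if "i < k" for i
    using that by (simp_all add: unit_vec_apply)
  ultimately have "point_vec ` pg_points k \<inter> s_vec ` {..<k} = {}"
    and "unit_vec k \<notin> point_vec ` pg_points k \<union> s_vec ` {..<k}"
    using k_pos by (force dest: fun_cong[where x = "k + 1"] fun_cong[where x = i for i])+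
  then show ?thesis
    unfolding X_base_def using inj_point inj_s finite_pg_points
    by (simp add: card_Un_disjoint card_image)
qed

lemma card_Y_base: "card Y_base = m + k + 1"
proof -
  have "inj_on t_vec {..<k}"
  proof (rule inj_onI)
    fix i j assume ij: "i \<in> {..<k}" "j \<in> {..<k}" and eq: "t_vec i = t_vec j"
    from fun_cong[OF eq, of i] show "i = j" using ij by (simp add: t_vec_apply split: if_splits)
  qed
  moreover have "unit_vec ` {k + 1..<r} \<inter> t_vec ` {..<k} = {}"
    by (auto simp: t_vec_neq_unit_vec[THEN not_sym])
  moreover have "inj_on unit_vec {k + 1..<r}" by (simp add: inj_on_def)
  ultimately show ?thesis
    unfolding Y_base_def by (simp add: card_Un_disjoint card_image r_def)
qed

lemma odd_card_base: "odd (m + k + 1)"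
  using card_pg_points[of k] k_pos odd_k by simp

lemma coord_sum_point: "p \<in> pg_points k \<Longrightarrow> J \<subseteq> {k..} \<Longrightarrow> coord_sum J p = 0"
  unfolding coord_sum_def using point_low by (auto intro!: sum.neutral)

lemma coord_sum_X_base:
  assumes "v \<in> X_base"
  shows "coord_sum {k + 1..<r} v = 0 \<and> coord_sum {k} v = 1"
  using assms
proof (cases rule: X_base_cases)
  case (2 p)
  have "coord_sum {k + 1..<r} p = 0" "coord_sum {k} p = 0"
    by (rule coord_sum_point[OF 2(1)]; force)+
  then show ?thesis
    using 2 point_coord_range[OF 2(1)] by (simp add: point_vec_def coord_sum_add coord_sum_unit_vec)
qed (simp_all add: s_vec_def coord_sum_add coord_sum_unit_vec)

lemma coord_sum_Y_base:
  "v \<in> Y_base \<Longrightarrow> coord_sum {k + 1..<r} v = 1 \<and> coord_sum {k} v = 0"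
  using k_less_r by (auto elim!: Y_base_cases simp: t_vec_def coord_sum_add coord_sum_unit_vec)

lemma supported_X_base:
  assumes "v \<in> X_base"
  shows "supported_below r v"
  using assms
proof (cases rule: X_base_cases)
  case (2 p)
  then show ?thesis using point_coord_range[OF 2(1)] by (simp add: supported_below_def point_vec_apply)
qed (use k_less_r in \<open>auto simp: supported_below_def unit_vec_apply s_vec_apply\<close>)

lemma supported_Y_base: "v \<in> Y_base \<Longrightarrow> supported_below r v"
  using k_less_r by (auto elim!: Y_base_cases simp: supported_below_def unit_vec_apply t_vec_apply)

lemma zero_sum_circuit_X_vecs: "zero_sum_circuit X_vecs"
  and card_X_vecs: "card X_vecs = r"
  using zero_sum_circuit_insert_sum[OF finite_X_base independent_X_base] card_X_base
    finite_X_base k_pos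
  by (simp_all add: X_vecs_def r_def)

lemma zero_sum_circuit_Y_vecs: "zero_sum_circuit Y_vecs"
  and card_Y_vecs: "card Y_vecs = r"
  using zero_sum_circuit_insert_sum[OF finite_Y_base independent_Y_base] card_Y_base
    finite_Y_base k_pos
  by (simp_all add: Y_vecs_def r_def)

lemma coord_sum_X_vecs:
  "v \<in> X_vecs \<Longrightarrow> coord_sum {k + 1..<r} v = 0 \<and> coord_sum {k} v = 1"
  using coord_sum_X_base coord_sum_sum_odd[of X_base] odd_card_base card_X_base
  by (auto simp: X_vecs_def)

lemma coord_sum_Y_vecs:
  "v \<in> Y_vecs \<Longrightarrow> coord_sum {k + 1..<r} v = 1 \<and> coord_sum {k} v = 0"
  using coord_sum_Y_base coord_sum_sum_odd[of Y_base] odd_card_base card_Y_base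
  by (auto simp: Y_vecs_def)

lemma supported_X_vecs: "v \<in> X_vecs \<Longrightarrow> supported_below r v"
  using supported_X_base supported_below_sum[of X_base] by (auto simp: X_vecs_def)

lemma supported_Y_vecs: "v \<in> Y_vecs \<Longrightarrow> supported_below r v"
  using supported_Y_base supported_below_sum[of Y_base] by (auto simp: Y_vecs_def)

lemma X_vecs_Y_vecs_disjoint: "X_vecs \<inter> Y_vecs = {}"
  using coord_sum_X_vecs coord_sum_Y_vecs by fastforce

lemma finite_X_vecs_Y_vecs: "finite (X_vecs \<union> Y_vecs)"
  by (simp add: X_vecs_def Y_vecs_def finite_X_base finite_Y_base)

lemma unit_vecs_contracted_subset: "unit_vec ` {k..<r} \<subseteq> X_vecs \<union> Y_vecs"
proof
  fix v assume "v \<in> unit_vec ` {k..<r}"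
  then obtain j where "k \<le> j" "j < r" "v = unit_vec j" by auto
  then show "v \<in> X_vecs \<union> Y_vecs"
    by (cases "j = k") (auto simp: X_vecs_def Y_vecs_def X_base_def Y_base_def)
qed

lemma point_vecs_subset: "point_vec ` pg_points k \<subseteq> X_vecs"
  by (auto simp: X_vecs_def X_base_def)

lemma point_vecs_disjoint_unit_vecs: "point_vec ` pg_points k \<inter> unit_vec ` {k..<r} = {}"
proof -
  have "point_vec p \<noteq> unit_vec j" if "p \<in> pg_points k" for p j
  proof
    assume eq: "point_vec p = unit_vec j"
    from fun_cong[OF eq, of k] fun_cong[OF eq, of "k + 1"] show False
      using that by (simp add: point_vec_apply unit_vec_apply split: if_splits)
  qed
  then show ?thesis by blast
qed

lemma independent_point_vecs_Un_unit_vecs_iff: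
  assumes "S \<subseteq> point_vec ` pg_points k"
  shows "gf2.independent (S \<union> unit_vec ` {k..<r}) \<longleftrightarrow> gf2.independent (kill_coords {k..<r} ` S)"
proof (rule independent_Un_unit_vecs_iff)
  show "finite S" using assms finite_pg_points finite_subset by blast
  show "S \<inter> unit_vec ` {k..<r} = {}" using assms point_vecs_disjoint_unit_vecs by blast
  have "inj_on (kill_coords {k..<r}) (point_vec ` pg_points k)"
    by (rule inj_on_inverseI[where g = point_vec]) (auto simp: kill_point_vec)
  then show "inj_on (kill_coords {k..<r}) S" using assms by (rule inj_on_subset)
qed simp

text \<open>The matroid lives on an initial segment of \<open>\<nat>\<close>, labelled bijectively by the vectors.\<close>
context
  fixes f :: "nat \<Rightarrow> vec"
  assumes enum: "bij_betw f {..<card (X_vecs \<union> Y_vecs)} (X_vecs \<union> Y_vecs)"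
begin

abbreviation E :: "nat set" where "E \<equiv> {..<card (X_vecs \<union> Y_vecs)}"

definition X :: "nat set" where "X = {x\<in>E. f x \<in> X_vecs}"
definition Y :: "nat set" where "Y = {x\<in>E. f x \<in> Y_vecs}"

definition relaxed :: "nat matroid" where "relaxed = (E, bases (vec_matroid E f) \<union> {X, Y})"

lemma inj_enum: "inj_on f E"
  using enum by (rule bij_betw_imp_inj_on)

lemma image_enum_preimage: "A \<subseteq> X_vecs \<union> Y_vecs \<Longrightarrow> f ` {x\<in>E. f x \<in> A} = A"
  using enum by (auto simp: bij_betw_def)

lemma enum_in: "x \<in> E \<Longrightarrow> f x \<in> X_vecs \<union> Y_vecs"
  using enum by (auto simp: bij_betw_def)

lemma image_X: "f ` X = X_vecs" and image_Y: "f ` Y = Y_vecs"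
  unfolding X_def Y_def by (rule image_enum_preimage; simp)+

lemma relaxed_in_class_D: "relaxed \<in> class_D"
  unfolding relaxed_def
proof (rule relax_vec_matroid_in_class_D[OF finite_lessThan inj_enum])
  show "E = X \<union> Y" using enum_in by (auto simp: X_def Y_def)
  show "X \<inter> Y = {}" using X_vecs_Y_vecs_disjoint by (auto simp: X_def Y_def)
  show "zero_sum_circuit (f ` X)" "card (f ` X) = r"
    "zero_sum_circuit (f ` Y)" "card (f ` Y) = r"
    by (simp_all add: image_X image_Y zero_sum_circuit_X_vecs card_X_vecs
        zero_sum_circuit_Y_vecs card_Y_vecs)
  show "2 \<le> r" using k_less_r k_pos by simp
  show "\<forall>x\<in>X. coord_sum {k + 1..<r} (f x) = 0 \<and> coord_sum {k} (f x) = 1"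
    using coord_sum_X_vecs by (simp add: X_def)
  show "\<forall>y\<in>Y. coord_sum {k + 1..<r} (f y) = 1 \<and> coord_sum {k} (f y) = 0"
    using coord_sum_Y_vecs by (simp add: Y_def)
  show "\<forall>x\<in>E. supported_below r (f x)"
    using enum_in supported_X_vecs supported_Y_vecs by blast
qed

definition contracted :: "nat set" where "contracted = {x\<in>E. f x \<in> unit_vec ` {k..<r}}"
definition points :: "nat set" where "points = {x\<in>E. f x \<in> point_vec ` pg_points k}"

definition pg_minor :: "nat matroid" where
  "pg_minor = (points, maximal_sets {I. I \<subseteq> points \<and> indep relaxed (I \<union> contracted)})"

lemma image_contracted: "f ` contracted = unit_vec ` {k..<r}"
  unfolding contracted_def by (rule image_enum_preimage[OF unit_vecs_contracted_subset])

lemma image_points: "f ` points = point_vec ` pg_points k"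
  unfolding points_def using point_vecs_subset by (intro image_enum_preimage) auto

lemma indep_relaxed_iff: "indep relaxed I \<longleftrightarrow> (I \<subseteq> E \<and> gf2.independent (f ` I)) \<or> I \<subseteq> X \<or> I \<subseteq> Y"
  unfolding relaxed_def indep_relax_iff indep_vec_matroid_iff[OF finite_lessThan inj_enum] ..

lemma is_minor_pg_minor: "is_minor pg_minor relaxed"
proof -
  let ?D = "E - contracted - points"
  have ground: "ground relaxed = E" by (simp add: relaxed_def ground_def)
  have "points \<inter> contracted = {}"
    using point_vecs_disjoint_unit_vecs by (auto simp: points_def contracted_def)
  then have remaining: "ground relaxed - contracted - ?D = points"
    by (auto simp: ground points_def)
  have "indep relaxed contracted"
    using independent_unit_vecs[of "{k..<r}"]
    by (simp add: indep_relaxed_iff image_contracted) (auto simp: contracted_def)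
  then have "is_minor (ground relaxed - contracted - ?D,
      maximal_sets {I. I \<subseteq> ground relaxed - contracted - ?D \<and> indep relaxed (I \<union> contracted)})
      relaxed"
    by (intro is_minor_contract_indep) (auto simp: ground contracted_def)
  then show ?thesis unfolding remaining pg_minor_def .
qed

lemma contracted_not_subset: "\<not> contracted \<subseteq> X" "\<not> contracted \<subseteq> Y"
proof -
  have "unit_vec k \<in> X_vecs" "unit_vec (k + 1) \<in> Y_vecs"
    using k_less_r by (auto simp: X_vecs_def X_base_def Y_vecs_def Y_base_def)
  moreover have "unit_vec k \<in> f ` contracted" "unit_vec (k + 1) \<in> f ` contracted"
    using k_less_r by (auto simp: image_contracted)
  ultimately show "\<not> contracted \<subseteq> X" "\<not> contracted \<subseteq> Y"
    using X_vecs_Y_vecs_disjoint image_X image_Y by blast+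
qed

lemma indep_relaxed_contract_iff:
  assumes "I \<subseteq> points"
  shows "indep relaxed (I \<union> contracted) \<longleftrightarrow> gf2_lin_indep id ((kill_coords {k..<r} \<circ> f) ` I)"
proof -
  have IE: "I \<subseteq> E" using assms by (auto simp: points_def)
  have fI: "f ` I \<subseteq> point_vec ` pg_points k" using assms image_points by blast
  have "I \<union> contracted \<subseteq> E" using IE by (auto simp: contracted_def)
  moreover have "\<not> I \<union> contracted \<subseteq> X" "\<not> I \<union> contracted \<subseteq> Y"
    using contracted_not_subset by auto
  ultimately have "indep relaxed (I \<union> contracted) \<longleftrightarrow> gf2.independent (f ` I \<union> unit_vec ` {k..<r})"
    unfolding indep_relaxed_iff by (auto simp: image_Un image_contracted)
  also have "\<dots> \<longleftrightarrow> gf2.independent (kill_coords {k..<r} ` f ` I)"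
    by (rule independent_point_vecs_Un_unit_vecs_iff[OF fI])
  also have "\<dots> \<longleftrightarrow> gf2_lin_indep id ((kill_coords {k..<r} \<circ> f) ` I)"
    using IE by (simp add: gf2_lin_indep_id_iff image_comp finite_subset)
  finally show ?thesis .
qed

lemma bij_points: "bij_betw (kill_coords {k..<r} \<circ> f) points (pg_points k)"
proof (rule bij_betw_trans)
  have "points \<subseteq> E" by (auto simp: points_def)
  then show "bij_betw f points (point_vec ` pg_points k)"
    using inj_on_subset[OF inj_enum] image_points by (simp add: bij_betw_def)
  show "bij_betw (kill_coords {k..<r}) (point_vec ` pg_points k) (pg_points k)"
    by (rule bij_betw_byWitness[where f' = point_vec]) (auto simp: kill_point_vec)
qed

lemma iso_pg_minor: "iso pg_minor (PG k)"
  unfolding iso_def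
proof (intro exI conjI allI impI)
  show "bij_betw (kill_coords {k..<r} \<circ> f) (ground pg_minor) (ground (PG k))"
    using bij_points by (simp add: pg_minor_def PG_eq ground_def)
  fix Z assume "Z \<subseteq> ground pg_minor"
  then have Z: "Z \<subseteq> points" by (simp add: pg_minor_def ground_def)
  have "bases pg_minor =
      maximal_sets {I. I \<subseteq> points \<and> gf2_lin_indep id ((kill_coords {k..<r} \<circ> f) ` I)}"
    using indep_relaxed_contract_iff by (simp add: pg_minor_def bases_def cong: conj_cong)
  then show "Z \<in> bases pg_minor \<longleftrightarrow> (kill_coords {k..<r} \<circ> f) ` Z \<in> bases (PG k)"
    using maximal_sets_bij_image_iff[OF bij_points Z] by (simp add: PG_eq bases_def)
qed

end

lemma ex_class_D_with_PG_minor: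
  "\<exists>M :: nat matroid. M \<in> class_D \<and> (\<exists>N :: nat matroid. is_minor N M \<and> iso N (PG k))"
proof -
  obtain f :: "nat \<Rightarrow> vec" where enum: "bij_betw f {..<card (X_vecs \<union> Y_vecs)} (X_vecs \<union> Y_vecs)"
    using ex_bij_betw_nat_finite[OF finite_X_vecs_Y_vecs] by (auto simp: atLeast0LessThan)
  show ?thesis
    using relaxed_in_class_D[OF enum] is_minor_pg_minor[OF enum] iso_pg_minor[OF enum] by blast
qed

end

theorem mainTheorem16:
  fixes k :: nat
  assumes "odd k" and "0 < k"
  shows "\<exists>M :: nat matroid. M \<in> class_D \<and>
           (\<exists>N :: nat matroid. is_minor N M \<and> iso N (PG k))"
proof -
  obtain idx where "bij_betw idx (pg_points k) {..<card (pg_points k)}"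
    using ex_bij_betw_finite_nat[OF finite_pg_points] by (auto simp: atLeast0LessThan)
  then interpret pg_construction k idx
    using assms(1) by unfold_locales
  show ?thesis by (rule ex_class_D_with_PG_minor)
qed

end
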